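(* Let $q\ge2$, $n\ge1$, and let $U$ be a $q\times q$ row-stochastic matrix. Given an $L$-sized ID code with deterministic decoders $\{(Q_j,\mathcal{D}_j):j=1,\dots,L\}$ for the noisy permutation channel $\Sigma_{n,U}$ with Type-I and Type-II error probabilities $\lambda_1,\lambda_2$, there exists an $L$-sized ID code $\{(Q_i',P_i):i=1,\dots,L\}$ with stochastic decoders for the $q$-ary noisy composition channel $q$-NCC$_{n,U}$ having the same error probabilities $\lambda_{i\to j}$ for all $i\ne j$ and $\lambda_{i\not\to i}$ for all $i$ (in particular the same $\lambda_1,\lambda_2$). Moreover, if each $Q_i$ is a point mass (deterministic encoder), then each $Q_i'$ is also a point mass.
   Context: $\Sigma_{n,U}$: input $\mathbf{x}\in[1:q]^n$, permuted by a uniformly random permutation of $[1:n]$, then each coordinate passed independently through the DMC $U$; $P_\Sigma(\mathbf{y}|\mathbf{x})=\frac1{n!}\sum_\sigma\prod_iU(y_i|x_{\sigma^{-1}(i)})$. The composition of $\mathbf{x}$ is $(N(1|\mathbf{x}),\dots,N(q|\mathbf{x}))$ with $N(c|\mathbf{x})=|\{i:x_i=c\}|$; $\mathcal{N}_{q,n}$ is the set of compositions of vectors in $[1:q]^n$. $q$-NCC$_{n,U}$ has input and output alphabet $\mathcal{N}_{q,n}$ and $P_{q\text{-NC}}(\mathbf{w}|\mathbf{t})=\sum_{\mathbf{z}:\text{ composition } \mathbf{w}}\prod_iU(z_i|x_i)$ for any $\mathbf{x}$ of composition $\mathbf{t}$. ID codes for a channel $P$ from $\mathcal{A}$ to $\mathcal{B}$: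 pairs $(Q_i,P_i)$ with $Q_i$ a distribution on $\mathcal{A}$ and $P_i(1|y)\in[0,1]$, $P_i(0|y)=1-P_i(1|y)$ (deterministic decoders: $P_i(1|y)=\mathbb{1}\{y\in\mathcal{D}_i\}$). $\lambda_{i\to j}=\sum_{x,y}Q_i(x)P(y|x)P_j(1|y)$, $\lambda_{i\not\to i}=\sum_{x,y}Q_i(x)P(y|x)P_i(0|y)$, $\lambda_1=\max_i\lambda_{i\not\to i}$, $\lambda_2=\max_{i\ne j}\lambda_{i\to j}$. *)

theory Defs
  imports Complex_Main "HOL-Combinatorics.Permutations"
begin

text \<open>Alphabet [1:q]; vectors in [1:q]^n are lists of length n (positions 0..n-1).
  A DMC U is given by U x y = U(y|x) (row x = input symbol).\<close>

definition row_stochastic :: "nat \<Rightarrow> (nat \<Rightarrow> nat \<Rightarrow> real) \<Rightarrow> bool" where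
  "row_stochastic q U \<longleftrightarrow>
     (\<forall>x\<in>{1..q}. (\<forall>y\<in>{1..q}. U x y \<ge> 0) \<and> (\<Sum>y\<in>{1..q}. U x y) = 1)"

definition vecs :: "nat \<Rightarrow> nat \<Rightarrow> nat list set" where
  "vecs q n = {xs. length xs = n \<and> set xs \<subseteq> {1..q}}"

definition composition :: "nat list \<Rightarrow> (nat \<Rightarrow> nat)" where
  "composition xs = count_list xs"

definition comps :: "nat \<Rightarrow> nat \<Rightarrow> (nat \<Rightarrow> nat) set" where
  "comps q n = composition ` vecs q n"

definition perm_chan :: "nat \<Rightarrow> (nat \<Rightarrow> nat \<Rightarrow> real) \<Rightarrow> nat list \<Rightarrow> nat list \<Rightarrow> real" where
  "perm_chan n U x y = (1 / fact n) *
     (\<Sum>\<sigma>\<in>{\<sigma>. \<sigma> permutes {..<n}}. \<Prod>i<n. U (x ! inv \<sigma> i) (y ! i))"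

definition ncc_chan :: "nat \<Rightarrow> nat \<Rightarrow> (nat \<Rightarrow> nat \<Rightarrow> real) \<Rightarrow> (nat \<Rightarrow> nat) \<Rightarrow> (nat \<Rightarrow> nat) \<Rightarrow> real" where
  "ncc_chan q n U t w =
     (let x = (SOME x. x \<in> vecs q n \<and> composition x = t)
      in \<Sum>z\<in>{z\<in>vecs q n. composition z = w}. \<Prod>i<n. U (x ! i) (z ! i))"

text \<open>ID codes for a channel P from A to B: encoders Q i (distributions on A),
  stochastic decoders D i y = P_i(1|y).\<close>
definition is_distr :: "'a set \<Rightarrow> ('a \<Rightarrow> real) \<Rightarrow> bool" where
  "is_distr A Q \<longleftrightarrow> (\<forall>x\<in>A. Q x \<ge> 0) \<and> (\<Sum>x\<in>A. Q x) = 1"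

definition point_mass :: "'a set \<Rightarrow> ('a \<Rightarrow> real) \<Rightarrow> bool" where
  "point_mass A Q \<longleftrightarrow> (\<exists>a\<in>A. \<forall>x\<in>A. Q x = (if x = a then 1 else 0))"

definition lam_to :: "'a set \<Rightarrow> 'b set \<Rightarrow> ('a \<Rightarrow> 'b \<Rightarrow> real) \<Rightarrow> (nat \<Rightarrow> 'a \<Rightarrow> real)
    \<Rightarrow> (nat \<Rightarrow> 'b \<Rightarrow> real) \<Rightarrow> nat \<Rightarrow> nat \<Rightarrow> real" where
  "lam_to A B P Q D i j = (\<Sum>x\<in>A. \<Sum>y\<in>B. Q i x * P x y * D j y)"

definition lam_miss :: "'a set \<Rightarrow> 'b set \<Rightarrow> ('a \<Rightarrow> 'b \<Rightarrow> real) \<Rightarrow> (nat \<Rightarrow> 'a \<Rightarrow> real)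
    \<Rightarrow> (nat \<Rightarrow> 'b \<Rightarrow> real) \<Rightarrow> nat \<Rightarrow> real" where
  "lam_miss A B P Q D i = (\<Sum>x\<in>A. \<Sum>y\<in>B. Q i x * P x y * (1 - D i y))"

definition det_dec :: "(nat \<Rightarrow> 'b set) \<Rightarrow> nat \<Rightarrow> 'b \<Rightarrow> real" where
  "det_dec Dec j y = (if y \<in> Dec j then 1 else 0)"

end

theory Submission
  imports Defs
begin

(* The transition probability P(y|x) of the permutation channel is unchanged when x or y is
   permuted. So it depends only on the compositions of x and y and is uniform on each
   composition class of outputs; summing over the class of y gives the composition channel.
   The composition-channel code therefore sends the composition of a codeword drawn from
   Q_i, and decodes by applying the old decoder to a uniformly random vector of the received
   composition; every error probability is preserved. *)

definition comp_class :: "nat \<Rightarrow> nat \<Rightarrow> (nat \<Rightarrow> nat) \<Rightarrow> nat list set" where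
  "comp_class q n w = {z \<in> vecs q n. composition z = w}"

lemma finite_vecs: "finite (vecs q n)"
proof -
  have "vecs q n = {xs. set xs \<subseteq> {1..q} \<and> length xs = n}"
    by (auto simp: vecs_def)
  then show ?thesis
    using finite_lists_length_eq[of "{1..q}" n] by simp
qed

lemma finite_comp_class: "finite (comp_class q n w)"
  using finite_vecs by (simp add: comp_class_def)

lemma card_comp_class_pos:
  assumes "w \<in> comps q n"
  shows "card (comp_class q n w) > 0"
  using assms finite_comp_class by (auto simp: comps_def comp_class_def card_gt_0_iff)

lemma sum_vecs_by_composition:
  "(\<Sum>x\<in>vecs q n. f x) = (\<Sum>t\<in>comps q n. \<Sum>x\<in>comp_class q n t. f x)"
  unfolding comps_def comp_class_def using finite_vecs by (rule sum.image_gen)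

lemma composition_eq_iff_mset_eq: "composition a = composition b \<longleftrightarrow> mset a = mset b"
  by (auto simp: composition_def multiset_eq_iff count_mset)

lemma composition_permute_list:
  assumes "\<sigma> permutes {..<length xs}"
  shows "composition (permute_list \<sigma> xs) = composition xs"
  using assms by (simp add: composition_eq_iff_mset_eq)

lemma permute_list_inv_permute_list:
  assumes "\<sigma> permutes {..<length xs}"
  shows "permute_list (inv \<sigma>) (permute_list \<sigma> xs) = xs"
  using permute_list_compose[OF permutes_inv[OF assms], of \<sigma>] permutes_inv_o(1)[OF assms]
  by simp

lemma bij_betw_permute_list_comp_class:
  assumes \<sigma>: "\<sigma> permutes {..<n}"
  shows "bij_betw (permute_list \<sigma>) (comp_class q n w) (comp_class q n w)"
proof (rule bij_betw_byWitness[where f' = "permute_list (inv \<sigma>)"])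
  have \<sigma>': "inv \<sigma> permutes {..<n}"
    using \<sigma> by (rule permutes_inv)
  have len: "length z = n" if "z \<in> comp_class q n w" for z
    using that by (simp add: comp_class_def vecs_def)
  show "\<forall>z\<in>comp_class q n w. permute_list (inv \<sigma>) (permute_list \<sigma> z) = z"
    using permute_list_inv_permute_list \<sigma> len by metis
  show "\<forall>z\<in>comp_class q n w. permute_list \<sigma> (permute_list (inv \<sigma>) z) = z"
    using permute_list_inv_permute_list[of "inv \<sigma>"] permutes_inv_inv[OF \<sigma>] \<sigma>' len by metis
  show "permute_list \<sigma> ` comp_class q n w \<subseteq> comp_class q n w"
       "permute_list (inv \<sigma>) ` comp_class q n w \<subseteq> comp_class q n w"
    using \<sigma> \<sigma>' len composition_permute_list
    by (fastforce simp: comp_class_def vecs_def)+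
qed

lemma perm_chan_altdef:
  "perm_chan n U x y =
     (\<Sum>\<sigma> | \<sigma> permutes {..<n}. \<Prod>i<n. U (x ! i) (y ! \<sigma> i)) / fact n"
proof -
  have "(\<Prod>i<n. U (x ! inv \<sigma> i) (y ! i)) = (\<Prod>i<n. U (x ! i) (y ! \<sigma> i))"
    if \<sigma>: "\<sigma> permutes {..<n}" for \<sigma>
    using prod.reindex_bij_betw[OF permutes_imp_bij[OF \<sigma>], of "\<lambda>i. U (x ! inv \<sigma> i) (y ! i)"]
      permutes_inverses(2)[OF \<sigma>]
    by simp
  then show ?thesis
    unfolding perm_chan_def by simp
qed

lemma perm_chan_permute_input:
  assumes \<pi>: "\<pi> permutes {..<n}" and len: "length x = n"
  shows "perm_chan n U (permute_list \<pi> x) y = perm_chan n U x y"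
proof -
  have "(\<Prod>i<n. U (permute_list \<pi> x ! i) (y ! \<sigma> i)) = (\<Prod>i<n. U (x ! i) (y ! (\<sigma> \<circ> inv \<pi>) i))"
    if "\<sigma> permutes {..<n}" for \<sigma>
    using prod.reindex_bij_betw[OF permutes_imp_bij[OF \<pi>], of "\<lambda>i. U (x ! i) (y ! (\<sigma> \<circ> inv \<pi>) i)"]
      permutes_inverses(2)[OF \<pi>] permute_list_nth[of \<pi> x] \<pi> len
    by simp
  then show ?thesis
    unfolding perm_chan_altdef
    using sum_permutations_compose_right[OF permutes_inv[OF \<pi>],
        of "\<lambda>\<sigma>. \<Prod>i<n. U (x ! i) (y ! \<sigma> i)"]
    by simp
qed

lemma perm_chan_permute_output:
  assumes \<pi>: "\<pi> permutes {..<n}" and len: "length y = n"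
  shows "perm_chan n U x (permute_list \<pi> y) = perm_chan n U x y"
proof -
  have "(\<Prod>i<n. U (x ! i) (permute_list \<pi> y ! \<sigma> i)) = (\<Prod>i<n. U (x ! i) (y ! (\<pi> \<circ> \<sigma>) i))"
    if \<sigma>: "\<sigma> permutes {..<n}" for \<sigma>
    using permute_list_nth[of \<pi> y] \<pi> len permutes_in_image[OF \<sigma>] by (intro prod.cong) auto
  then show ?thesis
    unfolding perm_chan_altdef
    using setum_permutations_compose_left[OF \<pi>, of "\<lambda>\<sigma>. \<Prod>i<n. U (x ! i) (y ! \<sigma> i)"]
    by simp
qed

lemma permute_list_of_composition_eq:
  assumes "composition a = composition b"
  obtains \<pi> where "\<pi> permutes {..<length b}" "permute_list \<pi> b = a"
  using assms mset_eq_permutation by (metis composition_eq_iff_mset_eq)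

lemma perm_chan_cong_composition:
  assumes "length x = n" "length y = n"
    and "composition x' = composition x" "composition y' = composition y"
  shows "perm_chan n U x' y' = perm_chan n U x y"
proof -
  obtain \<pi> \<rho> where "\<pi> permutes {..<n}" "permute_list \<pi> x = x'"
    and "\<rho> permutes {..<n}" "permute_list \<rho> y = y'"
    using assms permute_list_of_composition_eq by metis
  then show ?thesis
    using assms perm_chan_permute_input perm_chan_permute_output by metis
qed

lemma sum_perm_chan_comp_class:
  "(\<Sum>y\<in>comp_class q n w. perm_chan n U x y) = (\<Sum>z\<in>comp_class q n w. \<Prod>i<n. U (x ! i) (z ! i))"
proof -
  let ?W = "\<lambda>z. \<Prod>i<n. U (x ! i) (z ! i)"
  have orbit: "(\<Sum>y\<in>comp_class q n w. \<Prod>i<n. U (x ! i) (y ! \<sigma> i)) = (\<Sum>z\<in>comp_class q n w. ?W z)"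
    if \<sigma>: "\<sigma> permutes {..<n}" for \<sigma>
  proof -
    have "(\<Sum>y\<in>comp_class q n w. \<Prod>i<n. U (x ! i) (y ! \<sigma> i)) =
        (\<Sum>y\<in>comp_class q n w. ?W (permute_list \<sigma> y))"
      using \<sigma> by (intro sum.cong prod.cong) (auto simp: comp_class_def vecs_def permute_list_nth)
    also have "\<dots> = (\<Sum>z\<in>comp_class q n w. ?W z)"
      by (rule sum.reindex_bij_betw[OF bij_betw_permute_list_comp_class[OF \<sigma>]])
    finally show ?thesis .
  qed
  have "(\<Sum>y\<in>comp_class q n w. perm_chan n U x y) =
      (\<Sum>\<sigma> | \<sigma> permutes {..<n}. \<Sum>y\<in>comp_class q n w. \<Prod>i<n. U (x ! i) (y ! \<sigma> i)) / fact n"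
    unfolding perm_chan_altdef sum_divide_distrib[symmetric] by (rule arg_cong[OF sum.swap])
  also have "\<dots> = (\<Sum>z\<in>comp_class q n w. ?W z)"
    using orbit card_permutations[of "{..<n}" n] by simp
  finally show ?thesis .
qed

lemma ncc_chan_composition:
  assumes x: "x \<in> vecs q n"
  shows "ncc_chan q n U (composition x) w = (\<Sum>z\<in>comp_class q n w. \<Prod>i<n. U (x ! i) (z ! i))"
proof -
  define r where "r = (SOME r. r \<in> vecs q n \<and> composition r = composition x)"
  have r: "r \<in> vecs q n" "composition r = composition x"
    unfolding r_def using someI[of "\<lambda>r. r \<in> vecs q n \<and> composition r = composition x" x] x
    by auto
  have "ncc_chan q n U (composition x) w = (\<Sum>z\<in>comp_class q n w. \<Prod>i<n. U (r ! i) (z ! i))"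
    unfolding ncc_chan_def Let_def comp_class_def r_def ..
  also have "\<dots> = (\<Sum>y\<in>comp_class q n w. perm_chan n U r y)"
    by (rule sum_perm_chan_comp_class[symmetric])
  also have "\<dots> = (\<Sum>y\<in>comp_class q n w. perm_chan n U x y)"
    using x r by (intro sum.cong perm_chan_cong_composition) (auto simp: comp_class_def vecs_def)
  also have "\<dots> = (\<Sum>z\<in>comp_class q n w. \<Prod>i<n. U (x ! i) (z ! i))"
    by (rule sum_perm_chan_comp_class)
  finally show ?thesis .
qed

lemma perm_chan_eq_ncc_chan:
  assumes x: "x \<in> vecs q n" and y: "y \<in> vecs q n"
  shows "perm_chan n U x y =
    ncc_chan q n U (composition x) (composition y) / card (comp_class q n (composition y))"
proof -
  let ?T = "comp_class q n (composition y)"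
  have "card ?T * perm_chan n U x y = (\<Sum>y'\<in>?T. perm_chan n U x y)"
    by simp
  also have "\<dots> = (\<Sum>y'\<in>?T. perm_chan n U x y')"
    using x y by (intro sum.cong perm_chan_cong_composition) (auto simp: comp_class_def vecs_def)
  also have "\<dots> = ncc_chan q n U (composition x) (composition y)"
    using sum_perm_chan_comp_class ncc_chan_composition[OF x] by metis
  finally show ?thesis
    using card_comp_class_pos[of "composition y" q n] y
    by (simp add: comps_def field_simps)
qed

definition composition_law :: "nat \<Rightarrow> nat \<Rightarrow> (nat list \<Rightarrow> real) \<Rightarrow> (nat \<Rightarrow> nat) \<Rightarrow> real" where
  "composition_law q n Q t = (\<Sum>x\<in>comp_class q n t. Q x)"

definition class_average :: "nat \<Rightarrow> nat \<Rightarrow> (nat list \<Rightarrow> real) \<Rightarrow> (nat \<Rightarrow> nat) \<Rightarrow> real" where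
  "class_average q n h w = (\<Sum>y\<in>comp_class q n w. h y) / card (comp_class q n w)"

lemma sum_perm_chan_eq_sum_ncc_chan:
  "(\<Sum>x\<in>vecs q n. \<Sum>y\<in>vecs q n. Q x * perm_chan n U x y * h y) =
   (\<Sum>t\<in>comps q n. \<Sum>w\<in>comps q n.
      composition_law q n Q t * ncc_chan q n U t w * class_average q n h w)"
proof -
  define G where "G t = (\<Sum>w\<in>comps q n. ncc_chan q n U t w * class_average q n h w)" for t
  have inner: "(\<Sum>y\<in>vecs q n. perm_chan n U x y * h y) = G (composition x)"
    if x: "x \<in> vecs q n" for x
  proof -
    have "(\<Sum>y\<in>vecs q n. perm_chan n U x y * h y) =
        (\<Sum>w\<in>comps q n. \<Sum>y\<in>comp_class q n w. ncc_chan q n U (composition x) w / card (comp_class q n w) * h y)"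
      unfolding sum_vecs_by_composition[of _ q n]
      using perm_chan_eq_ncc_chan[OF x] by (intro sum.cong) (auto simp: comp_class_def)
    then show ?thesis
      by (simp add: G_def class_average_def sum_distrib_left sum_divide_distrib)
  qed
  have "(\<Sum>x\<in>vecs q n. \<Sum>y\<in>vecs q n. Q x * perm_chan n U x y * h y) =
      (\<Sum>x\<in>vecs q n. Q x * G (composition x))"
    using inner by (simp add: sum_distrib_left[symmetric] mult.assoc)
  also have "\<dots> = (\<Sum>t\<in>comps q n. composition_law q n Q t * G t)"
    unfolding sum_vecs_by_composition[of _ q n] composition_law_def sum_distrib_right
    by (intro sum.cong) (auto simp: comp_class_def)
  finally show ?thesis
    by (simp add: G_def sum_distrib_left mult.assoc)
qed

lemma is_distr_composition_law:
  assumes "is_distr (vecs q n) Q"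
  shows "is_distr (comps q n) (composition_law q n Q)"
  using assms sum_vecs_by_composition[of Q q n]
  by (auto simp: is_distr_def composition_law_def comp_class_def intro!: sum_nonneg)

lemma point_mass_composition_law:
  assumes "point_mass (vecs q n) Q"
  shows "point_mass (comps q n) (composition_law q n Q)"
proof -
  obtain a where a: "a \<in> vecs q n" and Q: "\<forall>x\<in>vecs q n. Q x = (if x = a then 1 else 0)"
    using assms unfolding point_mass_def by blast
  have "composition_law q n Q t = (if t = composition a then 1 else 0)" for t
  proof -
    have "composition_law q n Q t = (\<Sum>x\<in>comp_class q n t. if x = a then 1 else 0)"
      unfolding composition_law_def using Q by (intro sum.cong) (auto simp: comp_class_def)
    also have "\<dots> = (if t = composition a then 1 else 0)"
      using a finite_comp_class[of q n t] by (auto simp: comp_class_def)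
    finally show ?thesis .
  qed
  moreover have "composition a \<in> comps q n"
    using a by (simp add: comps_def)
  ultimately show ?thesis
    unfolding point_mass_def by blast
qed

lemma class_average_bounds:
  assumes "\<forall>y\<in>vecs q n. 0 \<le> D y \<and> D y \<le> 1"
  shows "0 \<le> class_average q n D w \<and> class_average q n D w \<le> 1"
proof -
  have "(\<Sum>y\<in>comp_class q n w. D y) \<le> card (comp_class q n w)"
    using assms sum_mono[of "comp_class q n w" D "\<lambda>_. 1"] by (auto simp: comp_class_def)
  moreover have "0 \<le> (\<Sum>y\<in>comp_class q n w. D y)"
    using assms by (auto simp: comp_class_def intro!: sum_nonneg)
  ultimately show ?thesis
    by (auto simp: class_average_def divide_le_eq_1)
qed

lemma class_average_complement:
  assumes "w \<in> comps q n"
  shows "class_average q n (\<lambda>y. 1 - D y) w = 1 - class_average q n D w"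
  using card_comp_class_pos[OF assms]
  by (simp add: class_average_def sum_subtractf divide_simps)

lemma lam_to_ncc_chan:
  "lam_to (comps q n) (comps q n) (ncc_chan q n U)
      (\<lambda>i. composition_law q n (Q i)) (\<lambda>j. class_average q n (D j)) i j =
   lam_to (vecs q n) (vecs q n) (perm_chan n U) Q D i j"
  unfolding lam_to_def by (rule sum_perm_chan_eq_sum_ncc_chan[symmetric])

lemma lam_miss_ncc_chan:
  "lam_miss (comps q n) (comps q n) (ncc_chan q n U)
      (\<lambda>i. composition_law q n (Q i)) (\<lambda>j. class_average q n (D j)) i =
   lam_miss (vecs q n) (vecs q n) (perm_chan n U) Q D i"
  unfolding lam_miss_def sum_perm_chan_eq_sum_ncc_chan
  by (intro sum.cong refl) (simp add: class_average_complement)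

theorem lemma2:
  fixes q n L :: nat
    and U :: "nat \<Rightarrow> nat \<Rightarrow> real"
    and Q :: "nat \<Rightarrow> nat list \<Rightarrow> real"
    and Dec :: "nat \<Rightarrow> nat list set"
  assumes "q \<ge> 2" and "n \<ge> 1"
    and "row_stochastic q U"
    and "\<forall>j\<in>{1..L}. is_distr (vecs q n) (Q j)"
    and "\<forall>j\<in>{1..L}. Dec j \<subseteq> vecs q n"
  shows "\<exists>(Q' :: nat \<Rightarrow> (nat \<Rightarrow> nat) \<Rightarrow> real) (P :: nat \<Rightarrow> (nat \<Rightarrow> nat) \<Rightarrow> real).
     (\<forall>i\<in>{1..L}. is_distr (comps q n) (Q' i)) \<and>
     (\<forall>i\<in>{1..L}. \<forall>w\<in>comps q n. 0 \<le> P i w \<and> P i w \<le> 1) \<and>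
     (\<forall>i\<in>{1..L}. \<forall>j\<in>{1..L}. i \<noteq> j \<longrightarrow>
        lam_to (comps q n) (comps q n) (ncc_chan q n U) Q' P i j =
        lam_to (vecs q n) (vecs q n) (perm_chan n U) Q (det_dec Dec) i j) \<and>
     (\<forall>i\<in>{1..L}.
        lam_miss (comps q n) (comps q n) (ncc_chan q n U) Q' P i =
        lam_miss (vecs q n) (vecs q n) (perm_chan n U) Q (det_dec Dec) i) \<and>
     ((\<forall>i\<in>{1..L}. point_mass (vecs q n) (Q i)) \<longrightarrow>
        (\<forall>i\<in>{1..L}. point_mass (comps q n) (Q' i)))"
proof (intro exI conjI)
  let ?Q' = "\<lambda>i. composition_law q n (Q i)"
  let ?P = "\<lambda>j. class_average q n (det_dec Dec j)"
  show "\<forall>i\<in>{1..L}. is_distr (comps q n) (?Q' i)"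
    using assms(4) is_distr_composition_law by blast
  show "\<forall>i\<in>{1..L}. \<forall>w\<in>comps q n. 0 \<le> ?P i w \<and> ?P i w \<le> 1"
    by (simp add: class_average_bounds det_dec_def)
  show "\<forall>i\<in>{1..L}. \<forall>j\<in>{1..L}. i \<noteq> j \<longrightarrow>
      lam_to (comps q n) (comps q n) (ncc_chan q n U) ?Q' ?P i j =
      lam_to (vecs q n) (vecs q n) (perm_chan n U) Q (det_dec Dec) i j"
    by (simp add: lam_to_ncc_chan)
  show "\<forall>i\<in>{1..L}.
      lam_miss (comps q n) (comps q n) (ncc_chan q n U) ?Q' ?P i =
      lam_miss (vecs q n) (vecs q n) (perm_chan n U) Q (det_dec Dec) i"
    by (simp add: lam_miss_ncc_chan)
  show "(\<forall>i\<in>{1..L}. point_mass (vecs q n) (Q i)) \<longrightarrow>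
      (\<forall>i\<in>{1..L}. point_mass (comps q n) (?Q' i))"
    by (simp add: point_mass_composition_law)
qed

end
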